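(* Let $(t_1,s_1),(t_2,s_2)\in\mathbb{C}^\times\times\mathbb{C}^\times$ with $t_1\ne t_2$ and $s_1\neq s_2$, let $X_1=A_2(t_1,s_1)$, $X_2=A_2(t_2,s_2)$, let $\varepsilon_0=\det(X_1)+\det(X_2)-\det(X_1+X_2)$, and let $f_n(z)=\sum_{k=0}^{\lfloor n/2\rfloor}(-1)^k\frac{n}{n-k}\binom{n-k}{k}z^{n-2k}$. Then for all $n\in\mathbb{N}$, $\bigl((X_1X_2)^n\bigr)^{-1}=f_n(\varepsilon_0)I_2-(X_1X_2)^n$ and $\bigl((X_2X_1)^n\bigr)^{-1}=f_n(\varepsilon_0)I_2-(X_2X_1)^n$.
   Context: $\mathbb{C}^\times=\mathbb{C}\setminus\{0\}$; $A_2(t,s)=\begin{pmatrix} t & s\\ \frac{1-t^2}{s} & -t\end{pmatrix}$; $I_2$ is the $2\times2$ identity matrix. *)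

theory Defs
  imports "HOL-Analysis.Analysis"
begin

definition A2 :: "complex \<Rightarrow> complex \<Rightarrow> complex^2^2" where
  "A2 t s = (\<chi> i j. if i = 1 then (if j = 1 then t else s)
                      else (if j = 1 then (1 - t^2) / s else - t))"

text \<open>Matrix power with respect to matrix multiplication (the operator ^ on vec types
  is componentwise, so we define the matrix power explicitly).\<close>
definition matpow :: "'a::semiring_1^'n^'n \<Rightarrow> nat \<Rightarrow> 'a^'n^'n" where
  "matpow A n = (((**) A) ^^ n) (mat 1)"

definition f_poly :: "nat \<Rightarrow> complex \<Rightarrow> complex" where
  "f_poly n z = (\<Sum>k = 0..n div 2. (-1)^k * (of_nat n / of_nat (n - k))
                   * of_nat ((n - k) choose k) * z ^ (n - 2 * k))"

end

theory Submission
  imports Defs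
begin

text \<open>
  Both X1 and X2 have trace 0 and determinant -1, so M = X1 X2 has determinant 1, and by
  polarizing the determinant, det (X + Y) = det X + det Y + tr X tr Y - tr (X Y), its trace
  is the number epsilon0 (as is that of X2 X1). For a 2 x 2 matrix of determinant 1,
  Cayley-Hamilton gives M^-1 = tr M I - M and M^(n+2) = tr M M^(n+1) - M^n, so
  tr M^n = L_n(tr M) for the Lucas polynomials L_0 = 2, L_1 = z, L_(n+2) = z L_(n+1) - L_n.
  The f_n are their closed form: the coefficient n/(n-k) C(n-k,k) equals
  C(n-k,k) + C(n-k-1,k-1), which obeys the matching Pascal rule. Applying the inverse
  formula to M^n gives the theorem.
\<close>

lemma matrix_inv_unique:
  fixes A :: "'a::semiring_1^'n^'m" and B :: "'a^'m^'n"
  assumes "A ** B = mat 1" "B ** A = mat 1"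
  shows "matrix_inv A = B"
proof -
  have inv: "matrix_inv A ** A = mat 1"
    unfolding matrix_inv_def by (rule someI2[of _ B]) (simp_all add: assms)
  have "matrix_inv A = matrix_inv A ** (A ** B)"
    using assms(1) by simp
  also have "\<dots> = B"
    using inv by (simp add: matrix_mul_assoc)
  finally show ?thesis .
qed

lemma matpow_0 [simp]: "matpow A 0 = mat 1"
  by (simp add: matpow_def)

lemma matpow_Suc [simp]: "matpow A (Suc n) = A ** matpow A n"
  by (simp add: matpow_def)

lemma det_matpow: "det (matpow (A::'a::comm_ring_1^'n^'n) n) = det A ^ n"
  by (induction n) (simp_all add: det_mul det_I)

lemma matrix_diff_rdistrib: "((A::'a::ring_1^'n^'m) - B) ** C = A ** C - B ** C"
  by (simp add: vec_eq_iff matrix_matrix_mult_def sum_subtractf algebra_simps)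

lemma trace_mat_mult: "trace (mat c ** (A::'a::comm_semiring_1^'n^'n)) = c * trace A"
  by (simp add: trace_def matrix_matrix_mult_def mat_def if_distrib if_distribR sum_distrib_left cong: if_cong)

lemma cayley_hamilton_2:
  fixes A :: "'a::comm_ring_1^2^2"
  shows "A ** A = mat (trace A) ** A - mat (det A)"
  by (simp add: vec_eq_iff forall_2 matrix_matrix_mult_def sum_2 det_2 trace_def mat_def algebra_simps)

lemma matrix_inv_2_det1:
  fixes A :: "'a::comm_ring_1^2^2"
  assumes "det A = 1"
  shows "matrix_inv A = mat (trace A) - A"
  by (rule matrix_inv_unique)
    (use assms in \<open>simp_all add: vec_eq_iff forall_2 matrix_matrix_mult_def sum_2 det_2 trace_def mat_def algebra_simps\<close>)

lemma matpow_Suc_Suc_det1: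
  fixes A :: "'a::comm_ring_1^2^2"
  assumes "det A = 1"
  shows "matpow A (Suc (Suc n)) = mat (trace A) ** matpow A (Suc n) - matpow A n"
proof -
  have "matpow A (Suc (Suc n)) = (A ** A) ** matpow A n"
    by (simp add: matrix_mul_assoc)
  also have "\<dots> = (mat (trace A) ** A - mat 1) ** matpow A n"
    using assms by (simp add: cayley_hamilton_2)
  finally show ?thesis
    by (simp add: matrix_diff_rdistrib matrix_mul_assoc)
qed

fun lucas :: "'a::comm_ring_1 \<Rightarrow> nat \<Rightarrow> 'a" where
  "lucas z 0 = 2"
| "lucas z (Suc 0) = z"
| "lucas z (Suc (Suc n)) = z * lucas z (Suc n) - lucas z n"

lemma trace_matpow_det1:
  fixes A :: "'a::comm_ring_1^2^2"
  assumes "det A = 1"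
  shows "trace (matpow A n) = lucas (trace A) n"
  by (induction "trace A" n rule: lucas.induct)
    (simp_all add: trace_I matpow_Suc_Suc_det1[OF assms] trace_sub trace_mat_mult matpow_Suc[of A 0] del: matpow_Suc)

text \<open>Truncated subtraction makes the Pascal rule for these coefficients hold only from
  n = 2 on, hence the side conditions below.\<close>

definition lucas_coeff :: "nat \<Rightarrow> nat \<Rightarrow> nat" where
  "lucas_coeff n k = ((n - k) choose k) + (if k = 0 then 0 else (n - k - 1) choose (k - 1))"

lemma of_nat_lucas_coeff:
  assumes "n \<ge> 1" "k \<le> n div 2"
  shows "of_nat n / of_nat (n - k) * of_nat ((n - k) choose k) = (of_nat (lucas_coeff n k) :: 'a::field_char_0)"
proof (cases "k = 0")
  case True
  then show ?thesis using assms by (simp add: lucas_coeff_def)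
next
  case False
  define m where "m = n - k"
  have "m \<ge> 1" "n = m + k"
    using assms False unfolding m_def by auto
  have "k * (m choose k) = m * ((m - 1) choose (k - 1))"
    using times_binomial_minus1_eq False by auto
  then have "n * (m choose k) = m * lucas_coeff n k"
    using \<open>n = m + k\<close> False unfolding lucas_coeff_def m_def[symmetric] by (simp add: algebra_simps)
  then have "(of_nat n * of_nat (m choose k) :: 'a) = of_nat m * of_nat (lucas_coeff n k)"
    by (metis of_nat_mult)
  then show ?thesis
    using \<open>m \<ge> 1\<close> unfolding m_def[symmetric] by (simp add: field_simps)
qed

lemma lucas_coeff_eq_0: "n \<ge> 2 \<Longrightarrow> n div 2 < k \<Longrightarrow> lucas_coeff n k = 0"
  unfolding lucas_coeff_def by (auto simp: binomial_eq_0)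

lemma lucas_coeff_Suc_Suc:
  assumes "n \<ge> 2"
  shows "lucas_coeff (Suc (Suc n)) k = lucas_coeff (Suc n) k + (if k = 0 then 0 else lucas_coeff n (k - 1))"
proof (cases k)
  case 0
  then show ?thesis by (simp add: lucas_coeff_def)
next
  case (Suc j)
  consider "j < n" | "j = n" | "j > n" by linarith
  then show ?thesis
  proof cases
    case 1
    then obtain m where m: "n - j = Suc m" by (metis Suc_diff_Suc)
    then have "Suc (Suc n) - Suc j = Suc (Suc m)" "Suc n - Suc j = Suc m"
      using 1 by simp_all
    with m show ?thesis
      unfolding lucas_coeff_def Suc by (cases j) (simp_all add: binomial_Suc_Suc)
  next
    case 2
    then show ?thesis
      using assms unfolding lucas_coeff_def Suc by (cases n) (auto simp: binomial_eq_0)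
  next
    case 3
    then show ?thesis
      using assms unfolding lucas_coeff_def Suc by (auto simp: binomial_eq_0)
  qed
qed

definition lucas_sum :: "nat \<Rightarrow> 'a::comm_ring_1 \<Rightarrow> nat \<Rightarrow> 'a" where
  "lucas_sum n z N = (\<Sum>k<N. (-1)^k * of_nat (lucas_coeff n k) * z ^ (n - 2 * k))"

lemma f_poly_eq_lucas_sum:
  assumes "n \<ge> 2" "n div 2 < N"
  shows "f_poly n z = lucas_sum n z N"
proof -
  have "f_poly n z = (\<Sum>k\<le>n div 2. (-1)^k * of_nat (lucas_coeff n k) * z ^ (n - 2 * k))"
    unfolding f_poly_def atLeast0AtMost
  proof (intro sum.cong refl)
    fix k
    assume "k \<in> {..n div 2}"
    then have "of_nat n / of_nat (n - k) * of_nat ((n - k) choose k) = (of_nat (lucas_coeff n k) :: complex)"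
      using assms by (intro of_nat_lucas_coeff) auto
    then show "(-1)^k * (of_nat n / of_nat (n - k)) * of_nat ((n - k) choose k) * z ^ (n - 2 * k)
             = (-1)^k * of_nat (lucas_coeff n k) * z ^ (n - 2 * k)"
      by (metis mult.assoc)
  qed
  also have "\<dots> = lucas_sum n z N"
    unfolding lucas_sum_def using assms
    by (intro sum.mono_neutral_left) (auto simp: lucas_coeff_eq_0)
  finally show ?thesis .
qed

lemma times_lucas_sum_eq:
  assumes "n \<ge> 1"
  shows "(\<Sum>k<N. (-1)^k * of_nat (lucas_coeff (Suc n) k) * z ^ (Suc (Suc n) - 2 * k))
           = z * lucas_sum (Suc n) z N"
  unfolding lucas_sum_def sum_distrib_left
proof (intro sum.cong refl)
  fix k
  show "(-1)^k * of_nat (lucas_coeff (Suc n) k) * z ^ (Suc (Suc n) - 2 * k)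
          = z * ((-1)^k * of_nat (lucas_coeff (Suc n) k) * z ^ (Suc n - 2 * k))"
  proof (cases "Suc n div 2 < k")
    case True
    then show ?thesis using assms by (simp add: lucas_coeff_eq_0)
  next
    case False
    then have "Suc (Suc n) - 2 * k = Suc (Suc n - 2 * k)" by auto
    then show ?thesis by simp
  qed
qed

lemma uminus_lucas_sum_eq:
  "(\<Sum>k<Suc N. if k = 0 then 0 else (-1)^k * of_nat (lucas_coeff n (k - 1)) * z ^ (Suc (Suc n) - 2 * k))
     = - lucas_sum n z N"
  unfolding lucas_sum_def sum.lessThan_Suc_shift by (simp flip: sum_negf)

lemma f_poly_Suc_Suc:
  assumes "n \<ge> 2"
  shows "f_poly (Suc (Suc n)) z = z * f_poly (Suc n) z - f_poly n z"
proof -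
  have "f_poly (Suc (Suc n)) z = lucas_sum (Suc (Suc n)) z (Suc (Suc n))"
    using assms by (intro f_poly_eq_lucas_sum) auto
  also have "\<dots> = (\<Sum>k<Suc (Suc n). (-1)^k * of_nat (lucas_coeff (Suc n) k) * z ^ (Suc (Suc n) - 2 * k))
      + (\<Sum>k<Suc (Suc n). if k = 0 then 0 else (-1)^k * of_nat (lucas_coeff n (k - 1)) * z ^ (Suc (Suc n) - 2 * k))"
    unfolding lucas_sum_def lucas_coeff_Suc_Suc[OF assms] sum.distrib[symmetric]
    by (intro sum.cong) (auto simp: algebra_simps)
  also have "\<dots> = z * lucas_sum (Suc n) z (Suc (Suc n)) - lucas_sum n z (Suc n)"
    using assms by (simp only: times_lucas_sum_eq uminus_lucas_sum_eq) simp
  also have "\<dots> = z * f_poly (Suc n) z - f_poly n z"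
    using assms f_poly_eq_lucas_sum[of n "Suc n"] f_poly_eq_lucas_sum[of "Suc n" "Suc (Suc n)"]
    by simp
  finally show ?thesis .
qed

text \<open>The hypothesis n \<ge> 1 is needed: f_poly 0 z = 0 because 0 / 0 = 0, while lucas z 0 = 2.\<close>

lemma f_poly_eq_lucas:
  assumes "n \<ge> 1"
  shows "f_poly n z = lucas z n"
  using assms
proof (induction n rule: less_induct)
  case (less n)
  show ?case
  proof (cases "n \<le> 3")
    case True
    with less.prems consider "n = 1" | "n = 2" | "n = 3"
      by linarith
    then show ?thesis
    proof cases
      case 1
      then show ?thesis by (simp add: f_poly_def)
    next
      case 2
      then show ?thesis by (simp add: f_poly_def numeral_eq_Suc)
    next
      case 3
      have "{0..(3::nat) div 2} = {0, 1}"
        by auto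
      then show ?thesis
        using 3 by (simp add: f_poly_def numeral_eq_Suc algebra_simps)
    qed
  next
    case False
    define m where "m = n - 2"
    have "n = Suc (Suc m)" "m \<ge> 2"
      using False by (simp_all add: m_def)
    then show ?thesis
      using less.IH[of m] less.IH[of "Suc m"] by (simp add: f_poly_Suc_Suc)
  qed
qed

lemma det_add_2:
  fixes A B :: "'a::comm_ring_1^2^2"
  shows "det (A + B) = det A + det B + trace A * trace B - trace (A ** B)"
  by (simp add: det_2 trace_def matrix_matrix_mult_def sum_2 algebra_simps)

lemma trace_A2: "trace (A2 t s) = 0"
  by (simp add: trace_def sum_2 A2_def)

lemma det_A2: "s \<noteq> 0 \<Longrightarrow> det (A2 t s) = -1"
  by (simp add: det_2 A2_def field_simps power2_eq_square)

theorem mainTheorem11: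
  fixes t1 s1 t2 s2 :: complex and n :: nat
  assumes "t1 \<noteq> 0" "s1 \<noteq> 0" "t2 \<noteq> 0" "s2 \<noteq> 0"
    and "t1 \<noteq> t2" "s1 \<noteq> s2"
    and "n \<ge> 1"
  shows "let X1 = A2 t1 s1; X2 = A2 t2 s2;
             \<epsilon>0 = det X1 + det X2 - det (X1 + X2)
         in matrix_inv (matpow (X1 ** X2) n) = mat (f_poly n \<epsilon>0) - matpow (X1 ** X2) n
          \<and> matrix_inv (matpow (X2 ** X1) n) = mat (f_poly n \<epsilon>0) - matpow (X2 ** X1) n"
  \<comment> \<open>only the hypotheses s1 \<noteq> 0 and s2 \<noteq> 0 are needed\<close>
proof -
  define X1 X2 where "X1 = A2 t1 s1" and "X2 = A2 t2 s2"
  have "det X1 = -1" "det X2 = -1"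
    using assms(2,4) by (simp_all add: X1_def X2_def det_A2)
  then have det1: "det (X1 ** X2) = 1" "det (X2 ** X1) = 1"
    by (simp_all add: det_mul)
  have eps: "det X1 + det X2 - det (X1 + X2) = trace (X1 ** X2)"
    by (simp add: det_add_2 X1_def X2_def trace_A2)
  have inv_pow: "matrix_inv (matpow M n) = mat (f_poly n (trace M)) - matpow M n"
    if "det M = 1" for M :: "complex^2^2"
    using that assms(7)
    by (simp add: matrix_inv_2_det1 det_matpow trace_matpow_det1 f_poly_eq_lucas)
  show ?thesis
    using inv_pow[OF det1(1)] inv_pow[OF det1(2)] trace_mul_sym[of X2 X1]
    unfolding Let_def X1_def[symmetric] X2_def[symmetric] eps by simp
qed

end
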